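(* Let $(G,\cdot)$ be a group, $\epsilon\in\{1,-1\}$, and $\psi_1,\psi_2\in\operatorname{End}(G,\cdot)$. Suppose either $\epsilon=-1$ and both $\psi_i$ satisfy $\psi_i([[G,\psi_i],G])\le Z(G,\cdot)$, or $\epsilon=1$ and both $\psi_i$ satisfy $\psi_i([\psi_i(G),G])\le Z(G,\cdot)$. For $i=1,2$ let $N_i=\{h\mapsto g\cdot\psi_i(g)^{\epsilon}\cdot h\cdot\psi_i(g)^{-\epsilon} : g\in G\}\subseteq\operatorname{Perm}(G)$ (a regular subgroup under these hypotheses). Then $N_1=N_2$ if and only if $\psi_1(g)\cdot\psi_2(g)^{-1}\in Z(G,\cdot)$ for every $g\in G$.
   Context: $\operatorname{Perm}(G)$ is the group of permutations of the set $G$. For $\psi\in\operatorname{End}(G,\cdot)$, $[g,\psi]=g\cdot\psi(g)^{-1}$ and $[G,\psi]$ is the subgroup generated by these elements. Commutators are $[x,y]=xyx^{-1}y^{-1}$ and $[A,B]$ is the subgroup generated by $[a,b]$, $a\in A$, $b\in B$. $Z(G,\cdot)$ is the centre. *)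

theory Defs
  imports "HOL-Algebra.Algebra"
begin

definition grp_center :: "('a, 'b) monoid_scheme \<Rightarrow> 'a set" where
  "grp_center G = {z \<in> carrier G. \<forall>x \<in> carrier G. z \<otimes>\<^bsub>G\<^esub> x = x \<otimes>\<^bsub>G\<^esub> z}"

definition comm_subgroup :: "('a, 'b) monoid_scheme \<Rightarrow> 'a set \<Rightarrow> 'a set \<Rightarrow> 'a set" where
  "comm_subgroup G A B = generate G
     {a \<otimes>\<^bsub>G\<^esub> b \<otimes>\<^bsub>G\<^esub> inv\<^bsub>G\<^esub> a \<otimes>\<^bsub>G\<^esub> inv\<^bsub>G\<^esub> b | a b. a \<in> A \<and> b \<in> B}"

definition endo_comm :: "('a, 'b) monoid_scheme \<Rightarrow> ('a \<Rightarrow> 'a) \<Rightarrow> 'a set" where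
  "endo_comm G \<psi> = generate G {g \<otimes>\<^bsub>G\<^esub> inv\<^bsub>G\<^esub> (\<psi> g) | g. g \<in> carrier G}"

definition N_set :: "('a, 'b) monoid_scheme \<Rightarrow> int \<Rightarrow> ('a \<Rightarrow> 'a) \<Rightarrow> ('a \<Rightarrow> 'a) set" where
  "N_set G \<epsilon> \<psi> = {(\<lambda>h \<in> carrier G. g \<otimes>\<^bsub>G\<^esub> (\<psi> g [^]\<^bsub>G\<^esub> \<epsilon>) \<otimes>\<^bsub>G\<^esub> h
                         \<otimes>\<^bsub>G\<^esub> (\<psi> g [^]\<^bsub>G\<^esub> (- \<epsilon>))) | g. g \<in> carrier G}"

end

theory Submission
  imports Defs
begin

text \<open>The map in \<open>N\<^sub>\<psi>\<close> indexed by \<open>g\<close> is \<open>h \<mapsto> g \<cdot> c(h)\<close> with \<open>c\<close> conjugation by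
  \<open>\<psi>(g)\<^sup>\<epsilon>\<close>; evaluating it at \<open>1\<close> recovers \<open>g\<close>. Hence \<open>N\<^sub>1 = N\<^sub>2\<close> iff for every \<open>g\<close> the
  conjugations by \<open>\<psi>\<^sub>1(g)\<^sup>\<epsilon>\<close> and \<open>\<psi>\<^sub>2(g)\<^sup>\<epsilon>\<close> agree, i.e. \<open>\<psi>\<^sub>1(g)\<^sup>\<epsilon> \<psi>\<^sub>2(g)\<^sup>-\<^sup>\<epsilon>\<close> is central,
  and for \<open>\<epsilon> = \<plusminus>1\<close> this is equivalent to \<open>\<psi>\<^sub>1(g) \<psi>\<^sub>2(g)\<^sup>-\<^sup>1\<close> being central.\<close>

lemma image_eq_image_iff_pointwise:
  assumes "\<And>x y. x \<in> A \<Longrightarrow> y \<in> A \<Longrightarrow> f x = g y \<Longrightarrow> x = y"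
  shows "f ` A = g ` A \<longleftrightarrow> (\<forall>x\<in>A. f x = g x)"
proof
  assume eq: "f ` A = g ` A"
  show "\<forall>x\<in>A. f x = g x"
  proof
    fix x assume x: "x \<in> A"
    then obtain y where "y \<in> A" "f x = g y" using eq by (metis image_eqI imageE)
    with x assms show "f x = g x" by metis
  qed
qed (rule image_cong[OF refl], simp)

context group
begin

lemma grp_centerI:
  "z \<in> carrier G \<Longrightarrow> (\<And>x. x \<in> carrier G \<Longrightarrow> z \<otimes> x = x \<otimes> z) \<Longrightarrow> z \<in> grp_center G"
  unfolding grp_center_def by blast

lemma grp_centerD:
  assumes "z \<in> grp_center G"
  shows "z \<in> carrier G" "x \<in> carrier G \<Longrightarrow> z \<otimes> x = x \<otimes> z"
  using assms unfolding grp_center_def by blast+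

lemma inv_mult_cancel_left [simp]:
  "a \<in> carrier G \<Longrightarrow> y \<in> carrier G \<Longrightarrow> inv a \<otimes> (a \<otimes> y) = y"
  by (simp add: m_assoc[symmetric])

lemma mult_inv_cancel_left [simp]:
  "a \<in> carrier G \<Longrightarrow> y \<in> carrier G \<Longrightarrow> a \<otimes> (inv a \<otimes> y) = y"
  by (simp add: m_assoc[symmetric])

lemma grp_center_conj:
  assumes "z \<in> grp_center G" "c \<in> carrier G"
  shows "c \<otimes> z \<otimes> inv c = z"
proof -
  have "c \<otimes> z = z \<otimes> c" using grp_centerD[OF assms(1)] assms(2) by simp
  then show ?thesis using grp_centerD(1)[OF assms(1)] assms(2) by (simp add: m_assoc)
qed

lemma grp_center_inv:
  assumes z: "z \<in> grp_center G"
  shows "inv z \<in> grp_center G"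
proof (rule grp_centerI)
  fix x assume x: "x \<in> carrier G"
  have "inv z \<otimes> x = inv z \<otimes> (x \<otimes> z) \<otimes> inv z"
    using grp_centerD(1)[OF z] x by (simp add: m_assoc)
  also have "\<dots> = inv z \<otimes> (z \<otimes> x) \<otimes> inv z"
    using grp_centerD(2)[OF z x] by simp
  also have "\<dots> = x \<otimes> inv z"
    using grp_centerD(1)[OF z] x by (simp add: m_assoc[symmetric])
  finally show "inv z \<otimes> x = x \<otimes> inv z" .
qed (use grp_centerD(1)[OF z] in simp)

lemma inv_mult_grp_center:
  assumes a: "a \<in> carrier G" and b: "b \<in> carrier G" and z: "a \<otimes> inv b \<in> grp_center G"
  shows "inv a \<otimes> b \<in> grp_center G"
proof -
  have "inv a \<otimes> b = inv a \<otimes> inv (a \<otimes> inv b) \<otimes> inv (inv a)"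
    using a b by (simp add: inv_mult_group m_assoc)
  also have "\<dots> = inv (a \<otimes> inv b)"
    by (rule grp_center_conj[OF grp_center_inv[OF z] inv_closed[OF a]])
  finally show ?thesis using grp_center_inv[OF z] by simp
qed

lemma inv_mult_grp_center_iff:
  assumes "a \<in> carrier G" "b \<in> carrier G"
  shows "inv a \<otimes> b \<in> grp_center G \<longleftrightarrow> a \<otimes> inv b \<in> grp_center G"
  using inv_mult_grp_center[of "inv a" "inv b"] inv_mult_grp_center[of a b] assms by auto

lemma int_pow_unit_mult_inv_grp_center_iff:
  fixes \<epsilon> :: int
  assumes "\<epsilon> \<in> {1, -1}" "x \<in> carrier G" "y \<in> carrier G"
  shows "x [^] \<epsilon> \<otimes> inv (y [^] \<epsilon>) \<in> grp_center G \<longleftrightarrow> x \<otimes> inv y \<in> grp_center G"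
proof -
  have "x [^] \<epsilon> = x \<and> y [^] \<epsilon> = y \<or> x [^] \<epsilon> = inv x \<and> y [^] \<epsilon> = inv y"
    using assms int_pow_neg[of _ 1] by auto
  then show ?thesis using inv_mult_grp_center_iff[of x y] assms(2,3) by auto
qed

lemma conj_eq_conj_iff_grp_center:
  assumes a: "a \<in> carrier G" and b: "b \<in> carrier G"
  shows "(\<forall>h\<in>carrier G. a \<otimes> h \<otimes> inv a = b \<otimes> h \<otimes> inv b) \<longleftrightarrow> a \<otimes> inv b \<in> grp_center G"
proof -
  have pointwise: "a \<otimes> h \<otimes> inv a = b \<otimes> h \<otimes> inv b \<longleftrightarrow>
      a \<otimes> inv b \<otimes> (b \<otimes> h \<otimes> inv b) = b \<otimes> h \<otimes> inv b \<otimes> (a \<otimes> inv b)"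
    if h: "h \<in> carrier G" for h
  proof -
    have "a \<otimes> h \<otimes> inv a = b \<otimes> h \<otimes> inv b \<longleftrightarrow>
        a \<otimes> h \<otimes> inv a \<otimes> (a \<otimes> inv b) = b \<otimes> h \<otimes> inv b \<otimes> (a \<otimes> inv b)"
      using a b h by simp
    moreover have "a \<otimes> h \<otimes> inv a \<otimes> (a \<otimes> inv b) = a \<otimes> inv b \<otimes> (b \<otimes> h \<otimes> inv b)"
      using a b h by (simp add: m_assoc)
    ultimately show ?thesis by simp
  qed
  have conj_by_b_onto: "x = b \<otimes> (inv b \<otimes> x \<otimes> b) \<otimes> inv b" if "x \<in> carrier G" for x
    using that b by (simp add: m_assoc)
  show ?thesis
  proof
    assume conj_eq: "\<forall>h\<in>carrier G. a \<otimes> h \<otimes> inv a = b \<otimes> h \<otimes> inv b"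
    show "a \<otimes> inv b \<in> grp_center G"
    proof (rule grp_centerI)
      fix x assume x: "x \<in> carrier G"
      have "inv b \<otimes> x \<otimes> b \<in> carrier G" using b x by simp
      with conj_eq pointwise conj_by_b_onto[OF x]
      show "a \<otimes> inv b \<otimes> x = x \<otimes> (a \<otimes> inv b)" by metis
    qed (use a b in simp)
  next
    assume "a \<otimes> inv b \<in> grp_center G"
    then show "\<forall>h\<in>carrier G. a \<otimes> h \<otimes> inv a = b \<otimes> h \<otimes> inv b"
      using b pointwise grp_centerD(2)[OF \<open>a \<otimes> inv b \<in> grp_center G\<close>] by simp
  qed
qed

end

definition conj_translation :: "('a, 'b) monoid_scheme \<Rightarrow> 'a \<Rightarrow> 'a \<Rightarrow> 'a \<Rightarrow> 'a" where
  "conj_translation G a g = (\<lambda>h \<in> carrier G. g \<otimes>\<^bsub>G\<^esub> a \<otimes>\<^bsub>G\<^esub> h \<otimes>\<^bsub>G\<^esub> inv\<^bsub>G\<^esub> a)"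

context group
begin

lemma N_set_eq_image_conj_translation:
  assumes "\<psi> \<in> carrier G \<rightarrow> carrier G"
  shows "N_set G \<epsilon> \<psi> = (\<lambda>g. conj_translation G (\<psi> g [^] \<epsilon>) g) ` carrier G"
proof -
  have "(\<lambda>h\<in>carrier G. g \<otimes> \<psi> g [^] \<epsilon> \<otimes> h \<otimes> \<psi> g [^] - \<epsilon>) = conj_translation G (\<psi> g [^] \<epsilon>) g"
    if "g \<in> carrier G" for g
    using that assms by (simp add: conj_translation_def int_pow_neg funcset_mem)
  then show ?thesis unfolding N_set_def Setcompr_eq_image by (rule image_cong[OF refl])
qed

lemma conj_translation_eq_iff:
  assumes "a \<in> carrier G" "b \<in> carrier G" "g \<in> carrier G" "g' \<in> carrier G"
  shows "conj_translation G a g = conj_translation G b g' \<longleftrightarrow>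
         g = g' \<and> a \<otimes> inv b \<in> grp_center G"
proof
  assume eq: "conj_translation G a g = conj_translation G b g'"
  from fun_cong[OF eq, of \<one>] have g: "g = g'"
    using assms by (simp add: conj_translation_def m_assoc)
  have "a \<otimes> h \<otimes> inv a = b \<otimes> h \<otimes> inv b" if "h \<in> carrier G" for h
    using fun_cong[OF eq, of h] that assms
    by (simp add: conj_translation_def g m_assoc)
  with g show "g = g' \<and> a \<otimes> inv b \<in> grp_center G"
    using conj_eq_conj_iff_grp_center assms by blast
next
  assume "g = g' \<and> a \<otimes> inv b \<in> grp_center G"
  then show "conj_translation G a g = conj_translation G b g'"
    using conj_eq_conj_iff_grp_center[of a b] assms
    by (auto simp: conj_translation_def m_assoc intro!: restrict_ext)
qed

lemma N_set_eq_iff: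
  assumes "\<epsilon> \<in> {1, -1}" "\<psi>1 \<in> carrier G \<rightarrow> carrier G" "\<psi>2 \<in> carrier G \<rightarrow> carrier G"
  shows "N_set G \<epsilon> \<psi>1 = N_set G \<epsilon> \<psi>2 \<longleftrightarrow>
         (\<forall>g \<in> carrier G. \<psi>1 g \<otimes> inv (\<psi>2 g) \<in> grp_center G)"
proof -
  have in_carrier: "\<psi>1 g \<in> carrier G" "\<psi>2 g \<in> carrier G" if "g \<in> carrier G" for g
    using assms(2,3) that by (simp_all add: funcset_mem)
  have "N_set G \<epsilon> \<psi>1 = N_set G \<epsilon> \<psi>2 \<longleftrightarrow>
      (\<forall>g \<in> carrier G. conj_translation G (\<psi>1 g [^] \<epsilon>) g = conj_translation G (\<psi>2 g [^] \<epsilon>) g)"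
    unfolding N_set_eq_image_conj_translation[OF assms(2)] N_set_eq_image_conj_translation[OF assms(3)]
    by (intro image_eq_image_iff_pointwise) (simp add: conj_translation_eq_iff in_carrier)
  also have "\<dots> \<longleftrightarrow> (\<forall>g \<in> carrier G. \<psi>1 g \<otimes> inv (\<psi>2 g) \<in> grp_center G)"
    using assms(1) by (simp add: conj_translation_eq_iff in_carrier int_pow_unit_mult_inv_grp_center_iff)
  finally show ?thesis .
qed

end

text \<open>The centrality hypothesis on \<open>\<psi>\<^sub>1, \<psi>\<^sub>2\<close> is what makes \<open>N\<^sub>i\<close> a regular subgroup;
  the equivalence itself holds without it.\<close>

theorem mainTheorem3:
  fixes G :: "('a, 'b) monoid_scheme" and \<epsilon> :: int and \<psi>1 \<psi>2 :: "'a \<Rightarrow> 'a"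
  assumes "group G"
    and "\<epsilon> \<in> {1, -1}"
    and "\<psi>1 \<in> hom G G" and "\<psi>2 \<in> hom G G"
    and "(\<epsilon> = -1 \<and> (\<forall>\<psi> \<in> {\<psi>1, \<psi>2}.
              \<psi> ` comm_subgroup G (endo_comm G \<psi>) (carrier G) \<subseteq> grp_center G))
       \<or> (\<epsilon> = 1 \<and> (\<forall>\<psi> \<in> {\<psi>1, \<psi>2}.
              \<psi> ` comm_subgroup G (\<psi> ` carrier G) (carrier G) \<subseteq> grp_center G))"
  shows "N_set G \<epsilon> \<psi>1 = N_set G \<epsilon> \<psi>2 \<longleftrightarrow>
         (\<forall>g \<in> carrier G. \<psi>1 g \<otimes>\<^bsub>G\<^esub> inv\<^bsub>G\<^esub> (\<psi>2 g) \<in> grp_center G)"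
  using group.N_set_eq_iff[OF assms(1,2)] assms(3,4) by (simp add: hom_def)

end
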